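(* For $R>1$ and a hyperbolic conjugacy class $[f]$ in $\mathrm{PSL}(2,\mathbb{Z})$, let $m_f(R)=\#\{[f']\in\mathcal{H}:\lambda(f')<R,\ l_{\mathcal{C}}(f')=l_{\mathcal{C}}(f)\}$. Then for every positive integer $k$, \[\lim_{R\to\infty}\frac{\#\{[f]\in\mathcal{H}:\lambda(f)<R,\ m_f(R)\ge k\}}{\#\{[f]\in\mathcal{H}:\lambda(f)<R\}}=1.\]
   Context: $\mathcal{H}$ denotes the set of conjugacy classes of hyperbolic elements of $\mathrm{PSL}(2,\mathbb{Z})$ (elements with $|\operatorname{tr}|>2$). For hyperbolic $f$, $\lambda(f)>1$ is its dilatation, the largest absolute value of an eigenvalue of a matrix representing $f$ (a conjugacy invariant). The Farey graph has vertex set $\mathbb{Q}\cup\{\infty\}$, $p/q$ and $r/s$ adjacent iff $|ps-qr|=1$, path metric $d_{\mathcal{C}}$ with unit edges; $f$ acts by $p/q\mapsto(ap+bq)/(cp+dq)$, and $l_{\mathcal{C}}(f)=\liminf_{j\to\infty}d_{\mathcal{C}}(v,f^jv)/j$ (for any vertex $v$) is its stable translation length, a conjugacy invariant. *)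

theory Defs
  imports "HOL-Analysis.Analysis"
begin

text \<open>2x2 integer matrices (a,b,c,d) representing [[a,b],[c,d]].\<close>
type_synonym imat = "int \<times> int \<times> int \<times> int"

definition SL2 :: "imat set" where
  "SL2 = {(a,b,c,d). a*d - b*c = 1}"

fun mmul :: "imat \<Rightarrow> imat \<Rightarrow> imat" where
  "mmul (a,b,c,d) (e,f,g,h) = (a*e + b*g, a*f + b*h, c*e + d*g, c*f + d*h)"

fun minv :: "imat \<Rightarrow> imat" where
  "minv (a,b,c,d) = (d, -b, -c, a)"

fun mneg :: "imat \<Rightarrow> imat" where
  "mneg (a,b,c,d) = (-a,-b,-c,-d)"

fun mtr :: "imat \<Rightarrow> int" where
  "mtr (a,b,c,d) = a + d"

text \<open>Conjugacy class in PSL(2,Z) of the element represented by M, as the set of all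
  SL(2,Z) matrices representing elements of that class.\<close>
definition psl_conjclass :: "imat \<Rightarrow> imat set" where
  "psl_conjclass M = {N. \<exists>g\<in>SL2. N = mmul (mmul g M) (minv g) \<or> N = mneg (mmul (mmul g M) (minv g))}"

definition hyperbolic :: "imat \<Rightarrow> bool" where
  "hyperbolic M \<longleftrightarrow> M \<in> SL2 \<and> \<bar>mtr M\<bar> > 2"

definition Hyp :: "imat set set" where
  "Hyp = {psl_conjclass M | M. hyperbolic M}"

fun is_eigenvalue :: "imat \<Rightarrow> complex \<Rightarrow> bool" where
  "is_eigenvalue (a,b,c,d) x \<longleftrightarrow>
     (\<exists>v1 v2::complex. (v1,v2) \<noteq> (0,0) \<and>
        of_int a * v1 + of_int b * v2 = x * v1 \<and> of_int c * v1 + of_int d * v2 = x * v2)"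

definition dilat :: "imat \<Rightarrow> real" where
  "dilat M = Sup {cmod x | x. is_eigenvalue M x}"

text \<open>Farey graph: vertices Q \<union> {\<infinity>}, represented as rat option (None = \<infinity>).\<close>
type_synonym fvert = "rat option"

definition fcoords :: "fvert \<Rightarrow> int \<times> int" where
  "fcoords v = (case v of None \<Rightarrow> (1, 0) | Some r \<Rightarrow> quotient_of r)"

definition fvert_of :: "int \<times> int \<Rightarrow> fvert" where
  "fvert_of pq = (if snd pq = 0 then None else Some (Fract (fst pq) (snd pq)))"

definition farey_adj :: "fvert \<Rightarrow> fvert \<Rightarrow> bool" where
  "farey_adj v w = (\<bar>fst (fcoords v) * snd (fcoords w) - snd (fcoords v) * fst (fcoords w)\<bar> = 1)"

definition farey_dist :: "fvert \<Rightarrow> fvert \<Rightarrow> nat" where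
  "farey_dist v w = (LEAST n. \<exists>p :: nat \<Rightarrow> fvert. p 0 = v \<and> p n = w \<and>
                        (\<forall>i<n. farey_adj (p i) (p (Suc i))))"

fun farey_act :: "imat \<Rightarrow> fvert \<Rightarrow> fvert" where
  "farey_act (a,b,c,d) v = fvert_of (a * fst (fcoords v) + b * snd (fcoords v), c * fst (fcoords v) + d * snd (fcoords v))"

definition transl_len :: "imat \<Rightarrow> ereal" where
  "transl_len M = liminf (\<lambda>j::nat. ereal (real (farey_dist None ((farey_act M ^^ j) None)) / real j))"

definition cdilat :: "imat set \<Rightarrow> real" where
  "cdilat C = dilat (SOME M. M \<in> C)"

definition ctransl :: "imat set \<Rightarrow> ereal" where
  "ctransl C = transl_len (SOME M. M \<in> C)"

definition mcount :: "imat set \<Rightarrow> real \<Rightarrow> nat" where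
  "mcount C R = card {C' \<in> Hyp. cdilat C' < R \<and> ctransl C' = ctransl C}"

end

theory Submission
  imports Defs "HOL-Real_Asymp.Real_Asymp"
begin

text \<open>Every hyperbolic class has a representative with positive entries and
  \<open>b c < tr\<^sup>2\<close>. For such a positive matrix \<open>M\<close> the vertices \<open>0\<close> and \<open>\<infinity>\<close> separate
  \<open>M\<^sup>-\<^sup>1 \<infinity>\<close> from the positive rationals, so the Farey distances from \<open>\<infinity>\<close> to \<open>M\<^sup>j \<infinity>\<close>
  and to \<open>M\<^sup>j 0\<close> obey a min-plus linear recursion. Hence the stable translation length is
  the min-plus eigenvalue \<open>min (A\<^sub>1\<^sub>1, A\<^sub>2\<^sub>2, (A\<^sub>1\<^sub>2 + A\<^sub>2\<^sub>1)/2)\<close>, a half-integer of size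
  \<open>O(log \<bar>tr\<bar>)\<close>. A class of dilatation below \<open>R\<close> has trace below \<open>R + 1\<close>, so on the at
  least \<open>R - 3\<close> such classes the translation length takes only \<open>O(log R)\<close> values, and by
  pigeonhole at most \<open>(k - 1) O(log R)\<close> of them share their value with fewer than \<open>k\<close>
  classes.\<close>

section \<open>SL(2,Z) and conjugacy classes in PSL(2,Z)\<close>

definition I2 :: imat where "I2 = (1,0,0,1)"

definition mconj :: "imat \<Rightarrow> imat \<Rightarrow> imat" where
  "mconj g M = mmul (mmul g M) (minv g)"

fun mdet :: "imat \<Rightarrow> int" where
  "mdet (a,b,c,d) = a*d - b*c"

lemma mmul_assoc: "mmul (mmul A B) C = mmul A (mmul B C)"
  by (cases A; cases B; cases C) (simp add: algebra_simps)

lemma SL2_iff_mdet: "A \<in> SL2 \<longleftrightarrow> mdet A = 1"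
  by (cases A) (simp add: SL2_def)

lemma mdet_mmul: "mdet (mmul A B) = mdet A * mdet B"
  by (cases A; cases B) (simp add: algebra_simps)

lemma mmul_in_SL2: "A \<in> SL2 \<Longrightarrow> B \<in> SL2 \<Longrightarrow> mmul A B \<in> SL2"
  by (simp add: SL2_iff_mdet mdet_mmul)

lemma minv_in_SL2: "A \<in> SL2 \<Longrightarrow> minv A \<in> SL2"
  by (cases A) (simp add: SL2_def algebra_simps)

lemma mneg_in_SL2: "A \<in> SL2 \<Longrightarrow> mneg A \<in> SL2"
  by (cases A) (simp add: SL2_def)

lemma I2_in_SL2: "I2 \<in> SL2"
  by (simp add: I2_def SL2_def)

lemma mmul_I2 [simp]: "mmul I2 A = A" "mmul A I2 = A"
  by (cases A, simp add: I2_def)+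

lemma mmul_minv: "A \<in> SL2 \<Longrightarrow> mmul A (minv A) = I2"
  by (cases A) (simp add: SL2_def I2_def algebra_simps)

lemma minv_mmul: "A \<in> SL2 \<Longrightarrow> mmul (minv A) A = I2"
  by (cases A) (simp add: SL2_def I2_def algebra_simps)

lemma minv_mmul_distrib: "minv (mmul A B) = mmul (minv B) (minv A)"
  by (cases A; cases B) (simp add: algebra_simps)

lemma mneg_mneg [simp]: "mneg (mneg A) = A"
  by (cases A) simp

lemma mmul_mneg [simp]: "mmul (mneg A) B = mneg (mmul A B)" "mmul A (mneg B) = mneg (mmul A B)"
  by (cases A; cases B; simp)+

lemma mtr_mneg [simp]: "mtr (mneg A) = - mtr A"
  by (cases A) simp

lemma mconj_in_SL2: "g \<in> SL2 \<Longrightarrow> M \<in> SL2 \<Longrightarrow> mconj g M \<in> SL2"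
  by (simp add: mconj_def mmul_in_SL2 minv_in_SL2)

lemma mtr_mconj:
  assumes "g \<in> SL2"
  shows "mtr (mconj g M) = mtr M"
proof -
  obtain a b c d where g: "g = (a,b,c,d)" by (cases g)
  obtain e f h i where M: "M = (e,f,h,i)" by (cases M)
  have "a*d - b*c = 1" using assms by (simp add: g SL2_def)
  then show ?thesis unfolding g M mconj_def by (simp; algebra)
qed

lemma mconj_mconj: "mconj g (mconj h M) = mconj (mmul g h) M"
  by (simp add: mconj_def mmul_assoc minv_mmul_distrib)

lemma mconj_I2 [simp]: "mconj I2 M = M"
  by (cases M) (simp add: mconj_def I2_def)

lemma mconj_minv_mconj: "g \<in> SL2 \<Longrightarrow> mconj (minv g) (mconj g M) = M"
  by (simp add: mconj_mconj minv_mmul)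

lemma mconj_mneg: "mconj g (mneg M) = mneg (mconj g M)"
  by (simp add: mconj_def)

lemma psl_conjclass_iff:
  "N \<in> psl_conjclass M \<longleftrightarrow> (\<exists>g\<in>SL2. N = mconj g M \<or> N = mneg (mconj g M))"
  by (simp add: psl_conjclass_def mconj_def)

lemma psl_conjclass_refl: "M \<in> psl_conjclass M"
  unfolding psl_conjclass_iff using I2_in_SL2 by force

lemma psl_conjclass_sym: "N \<in> psl_conjclass M \<Longrightarrow> M \<in> psl_conjclass N"
  unfolding psl_conjclass_iff by (metis mconj_minv_mconj mconj_mneg minv_in_SL2 mneg_mneg)

lemma psl_conjclass_trans:
  "N \<in> psl_conjclass M \<Longrightarrow> P \<in> psl_conjclass N \<Longrightarrow> P \<in> psl_conjclass M"
  unfolding psl_conjclass_iff by (metis mconj_mconj mconj_mneg mmul_in_SL2 mneg_mneg)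

lemma psl_conjclass_eq: "N \<in> psl_conjclass M \<Longrightarrow> psl_conjclass N = psl_conjclass M"
  by (meson psl_conjclass_sym psl_conjclass_trans subsetI subset_antisym)

lemma abs_mtr_psl_conjclass: "N \<in> psl_conjclass M \<Longrightarrow> \<bar>mtr N\<bar> = \<bar>mtr M\<bar>"
  unfolding psl_conjclass_iff by (metis abs_minus mtr_mconj mtr_mneg)

lemma hyperbolic_psl_conjclass: "hyperbolic M \<Longrightarrow> N \<in> psl_conjclass M \<Longrightarrow> hyperbolic N"
  unfolding hyperbolic_def psl_conjclass_iff
  by (metis mconj_in_SL2 mneg_in_SL2 abs_mtr_psl_conjclass psl_conjclass_iff)


section \<open>Positive representatives of hyperbolic classes\<close>

lemma hyperbolic_off_diagonal_nonzero:
  fixes a b c d :: int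
  assumes "a*d - b*c = 1" "\<bar>a + d\<bar> > 2"
  shows "b*c \<noteq> 0"
proof
  assume "b*c = 0"
  then have "a*d = 1" using assms(1) by linarith
  then have "(a = 1 \<and> d = 1) \<or> (a = -1 \<and> d = -1)" by (simp add: zmult_eq_1_iff)
  then show False using assms(2) by auto
qed

lemma exists_near_multiple:
  fixes x m :: int
  assumes "m > 0"
  shows "\<exists>q. \<bar>x - q*(2*m)\<bar> \<le> m"
proof -
  define q r where "q = x div (2*m)" and "r = x mod (2*m)"
  have x: "x = q*(2*m) + r" by (metis div_mult_mod_eq q_def r_def)
  have r: "0 \<le> r" "r < 2*m" using assms by (simp_all add: r_def)
  show ?thesis
  proof (cases "r \<le> m")
    case True
    then show ?thesis using r x by (intro exI[of _ q]) auto
  next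
    case False
    then show ?thesis using r x by (intro exI[of _ "q + 1"]) (auto simp: algebra_simps)
  qed
qed

lemma exists_balancing_translation:
  fixes a c d :: int
  assumes "c \<noteq> 0"
  obtains n where "\<bar>(a + n*c) - (d - n*c)\<bar> \<le> \<bar>c\<bar>"
proof -
  obtain q where q: "\<bar>(a - d) - q*(2*\<bar>c\<bar>)\<bar> \<le> \<bar>c\<bar>"
    using exists_near_multiple[of "\<bar>c\<bar>"] assms by auto
  have "sgn c * c = \<bar>c\<bar>" by (simp add: abs_sgn)
  then have "(a + (- q * sgn c)*c) - (d - (- q * sgn c)*c) = (a - d) - q*(2*\<bar>c\<bar>)"
    by (simp add: algebra_simps)
  then have "\<bar>(a + (- q * sgn c)*c) - (d - (- q * sgn c)*c)\<bar> \<le> \<bar>c\<bar>" using q by (simp only:)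
  then show thesis by (rule that)
qed

lemma mconj_translation:
  "mconj (1,n,0,1) (a,b,c,d) = (a + n*c, b + n*d - n*a - n*n*c, c, d - n*c)"
  by (simp add: mconj_def algebra_simps)

lemma mconj_rotation: "mconj (0,-1,1,0) (a,b,c,d) = (d, -c, -b, a)"
  by (simp add: mconj_def)

text \<open>The classical reduction: among the conjugates of \<open>\<plusminus>M\<close> with positive trace take one
  whose lower left entry \<open>c\<close> is minimal in absolute value; a translation then makes
  \<open>\<bar>a - d\<bar> \<le> \<bar>c\<bar>\<close>, and minimality against the rotation gives \<open>\<bar>c\<bar> \<le> \<bar>b\<bar>\<close>.\<close>

lemma exists_reduced_conj:
  assumes "hyperbolic M"
  obtains a b c d where "(a,b,c,d) \<in> psl_conjclass M" "a + d = \<bar>mtr M\<bar>" "a*d - b*c = 1"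
    "\<bar>a - d\<bar> \<le> \<bar>c\<bar>" "\<bar>c\<bar> \<le> \<bar>b\<bar>"
proof -
  define M0 where "M0 = (if mtr M > 0 then M else mneg M)"
  have M0_class: "M0 \<in> psl_conjclass M"
    unfolding M0_def psl_conjclass_iff by (rule bexI[of _ I2]) (auto simp: I2_in_SL2)
  have M0_SL2: "M0 \<in> SL2" and M0_tr: "mtr M0 = \<bar>mtr M\<bar>"
    using assms by (auto simp: M0_def hyperbolic_def mneg_in_SL2)
  define lower :: "imat \<Rightarrow> nat" where "lower N = nat \<bar>fst (snd (snd N))\<bar>" for N
  define conjugate where "conjugate N \<longleftrightarrow> (\<exists>g\<in>SL2. N = mconj g M0)" for N
  have "conjugate M0" unfolding conjugate_def using I2_in_SL2 by force
  then obtain N where N: "conjugate N" and N_min: "\<And>N'. conjugate N' \<Longrightarrow> lower N \<le> lower N'"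
    using ex_has_least_nat[of conjugate M0 lower] by blast
  obtain g where g: "g \<in> SL2" "N = mconj g M0" using N unfolding conjugate_def by blast
  obtain a b c d where abcd: "N = (a,b,c,d)" by (cases N)
  have det: "a*d - b*c = 1"
    using mconj_in_SL2[OF g(1) M0_SL2] by (simp add: g(2)[symmetric] abcd SL2_def)
  have tr: "a + d = \<bar>mtr M\<bar>"
    using mtr_mconj[OF g(1), of M0] M0_tr by (simp add: g(2)[symmetric] abcd)
  have "b*c \<noteq> 0" using hyperbolic_off_diagonal_nonzero[OF det] tr assms by (simp add: hyperbolic_def)
  then have "c \<noteq> 0" by simp
  then obtain n where n: "\<bar>(a + n*c) - (d - n*c)\<bar> \<le> \<bar>c\<bar>"
    by (rule exists_balancing_translation)
  define T :: imat where "T = (1,n,0,1)"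
  define S :: imat where "S = (0,-1,1,0)"
  have T_SL2: "T \<in> SL2" and S_SL2: "S \<in> SL2" by (simp_all add: T_def S_def SL2_def)
  define a' b' d' where "a' = a + n*c" and "b' = b + n*d - n*a - n*n*c" and "d' = d - n*c"
  have N': "mconj T N = (a',b',c,d')" by (simp add: T_def abcd mconj_translation a'_def b'_def d'_def)
  have "conjugate (mconj (mmul S T) N)"
    unfolding conjugate_def g(2) mconj_mconj
    using mmul_in_SL2[OF mmul_in_SL2[OF S_SL2 T_SL2] g(1)] by blast
  moreover have "mconj (mmul S T) N = (d', -c, -b', a')"
    by (simp add: mconj_mconj[symmetric] N' S_def mconj_rotation)
  ultimately have "\<bar>c\<bar> \<le> \<bar>b'\<bar>" using N_min by (fastforce simp: abcd lower_def)
  moreover have "(a',b',c,d') \<in> psl_conjclass M"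
  proof -
    have "(a',b',c,d') \<in> psl_conjclass M0"
      unfolding psl_conjclass_iff N'[symmetric] g(2) mconj_mconj
      using mmul_in_SL2[OF T_SL2 g(1)] by blast
    then show ?thesis using M0_class psl_conjclass_trans by blast
  qed
  moreover have "a'*d' - b'*c = 1" using det by (simp add: a'_def b'_def d'_def algebra_simps)
  moreover have "a' + d' = \<bar>mtr M\<bar>" using tr by (simp add: a'_def d'_def)
  moreover have "\<bar>a' - d'\<bar> \<le> \<bar>c\<bar>" using n by (simp add: a'_def d'_def)
  ultimately show thesis using that by blast
qed

lemma reduced_hyperbolic_bounds:
  fixes a b c d t :: int
  assumes det: "a*d - b*c = 1" and tr: "a + d = t" and t3: "t \<ge> 3"
    and red: "\<bar>a - d\<bar> \<le> \<bar>c\<bar>" "\<bar>c\<bar> \<le> \<bar>b\<bar>"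
  shows "0 < b*c" "b*c < t^2" "0 < a" "0 < d"
proof -
  have discr: "t^2 - 4 = (a - d)^2 + 4*(b*c)"
    using det tr[symmetric] by (simp add: power2_eq_square algebra_simps)
  have "(a - d)^2 \<le> c^2" using red(1) abs_le_square_iff by blast
  also have "c^2 \<le> \<bar>b*c\<bar>"
    using mult_right_mono[OF red(2) abs_ge_zero[of c]] by (simp add: power2_eq_square abs_mult)
  finally have sq: "(a - d)^2 \<le> \<bar>b*c\<bar>" .
  have "b*c \<noteq> 0" using hyperbolic_off_diagonal_nonzero[OF det] tr t3 by simp
  moreover have "t^2 \<ge> 9" using t3 power_mono[of 3 t 2] by simp
  moreover have "\<not> b*c < 0"
  proof
    assume "b*c < 0"
    then have "t^2 - 4 \<le> 3*(b*c)" using discr sq by simp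
    then show False using \<open>t^2 \<ge> 9\<close> \<open>b*c < 0\<close> by linarith
  qed
  ultimately show bc: "0 < b*c" by linarith
  have "0 \<le> (a - d)^2" by simp
  then show "b*c < t^2" using discr bc by linarith
  have "0 < a*d" using det bc by linarith
  then show "0 < a" "0 < d" using tr t3 zero_less_mult_iff[of a d] by linarith+
qed

lemma hyperbolic_positive_rep:
  assumes "hyperbolic M"
  obtains a b c d where "(a,b,c,d) \<in> psl_conjclass M" "a > 0" "b > 0" "c > 0" "d > 0"
    "a + d = \<bar>mtr M\<bar>" "a*d - b*c = 1" "b*c < \<bar>mtr M\<bar>^2"
proof -
  obtain a b c d where red: "(a,b,c,d) \<in> psl_conjclass M" "a + d = \<bar>mtr M\<bar>" "a*d - b*c = 1"
    "\<bar>a - d\<bar> \<le> \<bar>c\<bar>" "\<bar>c\<bar> \<le> \<bar>b\<bar>"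
    by (rule exists_reduced_conj[OF assms])
  have t3: "\<bar>mtr M\<bar> \<ge> 3" using assms by (simp add: hyperbolic_def)
  note bounds = reduced_hyperbolic_bounds[OF red(3,2) t3 red(4,5)]
  show thesis
  proof (cases "c > 0")
    case True
    then show thesis using that red bounds by (simp add: zero_less_mult_iff)
  next
    case False
    have "(d, -c, -b, a) \<in> psl_conjclass (a,b,c,d)"
      unfolding psl_conjclass_iff by (intro bexI[of _ "(0,-1,1,0)"]) (simp_all add: mconj_rotation SL2_def)
    then have "(d, -c, -b, a) \<in> psl_conjclass M" using red(1) psl_conjclass_trans by blast
    then show thesis using that red bounds False
      by (auto simp: zero_less_mult_iff algebra_simps)
  qed
qed


section \<open>Dilatation and trace\<close>

lemma is_eigenvalue_iff_char_poly:
  fixes a b c d :: int and x :: complex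
  assumes det: "a*d - b*c = 1" and b0: "b \<noteq> 0"
  shows "is_eigenvalue (a,b,c,d) x \<longleftrightarrow> x^2 - of_int (a+d) * x + 1 = 0"
proof
  assume "is_eigenvalue (a,b,c,d) x"
  then obtain v1 v2 where nz: "(v1,v2) \<noteq> (0,0)" and e1: "of_int a * v1 + of_int b * v2 = x * v1"
    and e2: "of_int c * v1 + of_int d * v2 = x * v2" by auto
  define D where "D = (of_int a - x) * (of_int d - x) - of_int b * of_int c"
  have "D * v1 = (of_int d - x) * ((of_int a - x) * v1 + of_int b * v2)
                 - of_int b * (of_int c * v1 + (of_int d - x) * v2)"
    by (simp add: D_def algebra_simps)
  also have "\<dots> = 0" using e1 e2 by (simp add: algebra_simps)
  finally have "D * v1 = 0" .
  moreover have "D * v2 = (of_int a - x) * (of_int c * v1 + (of_int d - x) * v2)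
                 - of_int c * ((of_int a - x) * v1 + of_int b * v2)"
    by (simp add: D_def algebra_simps)
  moreover have "\<dots> = 0" using e1 e2 by (simp add: algebra_simps)
  ultimately have "D = 0" using nz by auto
  moreover have "of_int (a*d - b*c) = (1::complex)" using det by simp
  ultimately show "x^2 - of_int (a+d) * x + 1 = 0"
    unfolding D_def by (simp add: power2_eq_square algebra_simps)
next
  assume q: "x^2 - of_int (a+d) * x + 1 = 0"
  have dc: "of_int a * of_int d - of_int b * of_int c = (1::complex)"
    using det by (metis of_int_1 of_int_diff of_int_mult)
  show "is_eigenvalue (a,b,c,d) x"
    unfolding is_eigenvalue.simps
  proof (intro exI conjI)
    show "(of_int b :: complex, x - of_int a) \<noteq> (0, 0)" using b0 by simp
    show "of_int a * of_int b + of_int b * (x - of_int a) = x * (of_int b :: complex)"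
      by (simp add: algebra_simps)
    have "x * (x - (of_int a::complex)) - (of_int c * of_int b + of_int d * (x - of_int a))
       = (x^2 - of_int (a+d) * x + 1) - (1 - (of_int a * of_int d - of_int b * of_int c))"
      by (simp add: power2_eq_square algebra_simps)
    also have "\<dots> = 0" using q dc by simp
    finally show "of_int c * of_int b + of_int d * (x - of_int a) = x * (x - (of_int a::complex))"
      by simp
  qed
qed

lemma dilat_hyperbolic:
  assumes "hyperbolic M"
  shows "dilat M = (\<bar>mtr M\<bar> + sqrt ((mtr M)^2 - 4)) / 2"
proof -
  obtain a b c d where M: "M = (a,b,c,d)" by (cases M)
  have det: "a*d - b*c = 1" and tr: "\<bar>a+d\<bar> > 2" using assms by (auto simp: M hyperbolic_def SL2_def)
  have b0: "b \<noteq> 0" using hyperbolic_off_diagonal_nonzero[OF det tr] by simp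
  define t :: real where "t = of_int (a+d)"
  define s where "s = sqrt (t^2 - 4)"
  have "3 \<le> \<bar>t\<bar>" using tr unfolding t_def by linarith
  then have "3^2 \<le> \<bar>t\<bar>^2" by (rule power_mono) simp
  then have t2: "t^2 > 4" by simp
  then have s2: "s^2 = t^2 - 4" and s0: "s \<ge> 0" unfolding s_def by simp_all
  define r1 r2 where "r1 = (t + s)/2" and "r2 = (t - s)/2"
  have "r1 + r2 = t" unfolding r1_def r2_def by (simp add: field_simps)
  then have sum: "of_real r1 + of_real r2 = (of_int (a+d) :: complex)"
    by (metis of_real_add of_real_of_int_eq t_def)
  have "r1 * r2 = 1" using s2 unfolding r1_def r2_def by (simp add: power2_eq_square algebra_simps)
  then have prod: "of_real r1 * of_real r2 = (1::complex)" by (metis of_real_1 of_real_mult)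
  have fac: "x^2 - of_int (a+d) * x + 1 = (x - of_real r1) * (x - of_real r2)" for x :: complex
  proof -
    have "(x - of_real r1) * (x - of_real r2) = x^2 - (of_real r1 + of_real r2) * x + of_real r1 * of_real r2"
      by (simp add: power2_eq_square algebra_simps)
    then show ?thesis by (simp only: sum prod)
  qed
  have "{cmod x | x. is_eigenvalue M x} = {cmod x | x. x = of_real r1 \<or> x = of_real r2}"
    unfolding M is_eigenvalue_iff_char_poly[OF det b0] fac by simp
  also have "\<dots> = {cmod (complex_of_real r1), cmod (complex_of_real r2)}" by blast
  also have "\<dots> = {\<bar>r1\<bar>, \<bar>r2\<bar>}" by simp
  finally have E: "{cmod x | x. is_eigenvalue M x} = {\<bar>r1\<bar>, \<bar>r2\<bar>}" .
  have "max \<bar>r1\<bar> \<bar>r2\<bar> = (\<bar>t\<bar> + s)/2"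
    using s0 unfolding r1_def r2_def by (simp add: max_def abs_if field_simps)
  then show ?thesis unfolding dilat_def E by (simp add: cSup_eq_Max M t_def s_def)
qed

lemma dilat_bounds:
  assumes "hyperbolic M"
  shows "\<bar>mtr M\<bar> - 1 < dilat M" "dilat M < \<bar>mtr M\<bar>"
proof -
  define t :: real where "t = \<bar>mtr M\<bar>"
  have t3: "t \<ge> 3" using assms by (auto simp: hyperbolic_def t_def)
  have d: "dilat M = (t + sqrt (t^2 - 4))/2" using dilat_hyperbolic[OF assms] by (simp add: t_def)
  have "(t-2)^2 < t^2 - 4" using t3 by (simp add: power2_eq_square algebra_simps)
  then have "t - 2 < sqrt (t^2 - 4)" by (rule real_less_rsqrt)
  moreover have "sqrt (t^2 - 4) < sqrt (t^2)" by (rule real_sqrt_less_mono) simp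
  then have "sqrt (t^2 - 4) < t" using t3 by simp
  ultimately show "\<bar>mtr M\<bar> - 1 < dilat M" "dilat M < \<bar>mtr M\<bar>" using d t_def by auto
qed


section \<open>The action on the Farey graph\<close>

fun mvec :: "imat \<Rightarrow> int \<times> int \<Rightarrow> int \<times> int" where
  "mvec (a,b,c,d) (p,q) = (a*p + b*q, c*p + d*q)"

fun det2 :: "int \<times> int \<Rightarrow> int \<times> int \<Rightarrow> int" where
  "det2 (p,q) (r,s) = p * s - q * r"

definition primitive :: "int \<times> int \<Rightarrow> bool" where
  "primitive x \<longleftrightarrow> coprime (fst x) (snd x)"

lemma farey_adj_iff_det2: "farey_adj v w \<longleftrightarrow> \<bar>det2 (fcoords v) (fcoords w)\<bar> = 1"
  by (cases "fcoords v"; cases "fcoords w") (simp add: farey_adj_def)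

lemma farey_adj_sym: "farey_adj v w \<Longrightarrow> farey_adj w v"
  unfolding farey_adj_def by (simp add: abs_minus_commute algebra_simps)

lemma farey_act_eq_mvec: "farey_act M v = fvert_of (mvec M (fcoords v))"
  by (cases M; cases "fcoords v") simp

lemma fcoords_None [simp]: "fcoords None = (1,0)"
  by (simp add: fcoords_def)

lemma fcoords_zero [simp]: "fcoords (Some 0) = (0,1)"
  by (simp add: fcoords_def)

lemma fcoords_primitive: "primitive (fcoords v)"
proof (cases v)
  case None
  then show ?thesis by (simp add: primitive_def)
next
  case (Some r)
  then show ?thesis
    by (cases "quotient_of r") (simp add: primitive_def fcoords_def quotient_of_coprime)
qed

lemma fcoords_Some:
  assumes "fcoords (Some r) = (p,q)"
  shows "q > 0" "r = Fract p q"
proof -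
  have qr: "quotient_of r = (p,q)" using assms by (simp add: fcoords_def)
  show "q > 0" using quotient_of_denom_pos[OF qr] .
  show "r = Fract p q" using quotient_of_div[OF qr] by (simp add: Fract_of_int_quotient)
qed

lemma fcoords_snd_nonneg: "snd (fcoords v) \<ge> 0"
  by (cases v; cases "fcoords v") (auto dest: fcoords_Some(1))

lemma fvert_of_fcoords [simp]: "fvert_of (fcoords v) = v"
proof (cases v)
  case None
  then show ?thesis by (simp add: fvert_of_def)
next
  case (Some r)
  obtain p q where pq: "fcoords (Some r) = (p,q)" by (cases "fcoords (Some r)")
  then show ?thesis using Some fcoords_Some[OF pq] by (simp add: fvert_of_def)
qed

lemma fvert_of_uminus: "fvert_of (-p, -q) = fvert_of (p, q)"
proof -
  have "Fract (-p) (-q) = Fract p q" using mult_rat_cancel[of "-1" p q] by simp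
  then show ?thesis by (simp add: fvert_of_def)
qed

lemma fcoords_fvert_of:
  assumes "primitive (p,q)"
  shows "fcoords (fvert_of (p,q)) = (p,q) \<or> fcoords (fvert_of (p,q)) = (-p,-q)"
proof -
  have g: "gcd p q = 1" using assms by (simp add: primitive_def)
  show ?thesis
  proof (cases "q = 0")
    case True
    then have "\<bar>p\<bar> = 1" using g by simp
    then show ?thesis using True by (auto simp: fvert_of_def abs_if split: if_splits)
  next
    case False
    have "Rat.normalize (p,q) = (p,q) \<or> Rat.normalize (p,q) = (-p,-q)"
      using g False by (auto simp: normalize_def Let_def)
    then show ?thesis using False by (simp add: fvert_of_def fcoords_def quotient_of_Fract)
  qed
qed

lemma fcoords_fvert_of_pos: "primitive (p,q) \<Longrightarrow> q > 0 \<Longrightarrow> fcoords (fvert_of (p,q)) = (p,q)"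
  using fcoords_fvert_of fcoords_snd_nonneg[of "fvert_of (p,q)"] by fastforce

lemma primitive_of_det2:
  assumes "\<bar>p * s - q * r\<bar> = 1"
  shows "primitive (r,s)"
proof -
  have "coprime r s"
  proof (rule coprimeI)
    fix e assume "e dvd r" "e dvd s"
    then have "e dvd \<bar>p * s - q * r\<bar>" by simp
    then show "is_unit e" using assms by simp
  qed
  then show ?thesis by (simp add: primitive_def)
qed

lemma mvec_mmul: "mvec (mmul A B) x = mvec A (mvec B x)"
  by (cases A; cases B; cases x) (simp add: algebra_simps)

lemma mvec_uminus: "mvec M (-p,-q) = (- fst (mvec M (p,q)), - snd (mvec M (p,q)))"
  by (cases M) (simp add: algebra_simps)

lemma mvec_mneg: "mvec (mneg M) x = (- fst (mvec M x), - snd (mvec M x))"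
  by (cases M; cases x) simp

lemma det2_mvec:
  assumes "M \<in> SL2"
  shows "det2 (mvec M x) (mvec M y) = det2 x y"
proof -
  obtain a b c d where M: "M = (a,b,c,d)" by (cases M)
  obtain p q r s where xy: "x = (p,q)" "y = (r,s)" by (cases x; cases y)
  have "det2 (mvec M x) (mvec M y) = (a*d - b*c) * (p * s - q * r)"
    by (simp add: M xy algebra_simps)
  then show ?thesis using assms by (simp add: M xy SL2_def)
qed

lemma det2_uminus: "det2 (-p,-q) y = - det2 (p,q) y" "det2 x (-r,-s) = - det2 x (r,s)"
  by (cases y, simp, cases x, simp)

text \<open>Primitivity is preserved because \<open>M\<^sup>-\<^sup>1\<close> has integer entries as well.\<close>

lemma primitive_mvec:
  assumes "M \<in> SL2" "primitive x"
  shows "primitive (mvec M x)"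
proof -
  obtain a b c d where M: "M = (a,b,c,d)" by (cases M)
  obtain p q where x: "x = (p,q)" by (cases x)
  have det: "a*d - b*c = 1" using assms(1) by (simp add: M SL2_def)
  have "coprime (a*p + b*q) (c*p + d*q)"
  proof (rule coprimeI)
    fix e assume e1: "e dvd a*p + b*q" and e2: "e dvd c*p + d*q"
    have "d*(a*p + b*q) - b*(c*p + d*q) = (a*d - b*c) * p"
      "a*(c*p + d*q) - c*(a*p + b*q) = (a*d - b*c) * q" by (simp_all add: algebra_simps)
    then have "p = d*(a*p + b*q) - b*(c*p + d*q)" "q = a*(c*p + d*q) - c*(a*p + b*q)"
      using det by simp_all
    moreover have "e dvd d*(a*p + b*q) - b*(c*p + d*q)" "e dvd a*(c*p + d*q) - c*(a*p + b*q)"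
      using e1 e2 by (auto intro!: dvd_diff dvd_mult)
    ultimately have "e dvd p" "e dvd q" by simp_all
    moreover have "coprime p q" using assms(2) by (simp add: x primitive_def)
    ultimately show "is_unit e" using coprime_common_divisor by blast
  qed
  then show ?thesis by (simp add: M x primitive_def)
qed

lemma fcoords_farey_act:
  assumes "M \<in> SL2"
  shows "fcoords (farey_act M v) = mvec M (fcoords v) \<or>
         fcoords (farey_act M v) = (- fst (mvec M (fcoords v)), - snd (mvec M (fcoords v)))"
  using fcoords_fvert_of[of "fst (mvec M (fcoords v))" "snd (mvec M (fcoords v))"]
    primitive_mvec[OF assms fcoords_primitive]
  unfolding farey_act_eq_mvec by simp

lemma farey_act_farey_act:
  assumes "B \<in> SL2"
  shows "farey_act A (farey_act B v) = farey_act (mmul A B) v"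
proof -
  obtain p q where pq: "mvec B (fcoords v) = (p,q)" by (cases "mvec B (fcoords v)")
  have "fcoords (farey_act B v) = (p,q) \<or> fcoords (farey_act B v) = (-p,-q)"
    using fcoords_farey_act[OF assms, of v] pq by simp
  then show ?thesis
    unfolding farey_act_eq_mvec[of A] farey_act_eq_mvec[of "mmul A B"] mvec_mmul pq
    by (auto simp: mvec_uminus fvert_of_uminus)
qed

lemma mvec_I2 [simp]: "mvec I2 x = x"
  by (cases x) (simp add: I2_def)

lemma farey_act_I2 [simp]: "farey_act I2 v = v"
  by (simp add: farey_act_eq_mvec)

lemma farey_act_mneg: "farey_act (mneg M) = farey_act M"
proof
  fix v
  show "farey_act (mneg M) v = farey_act M v"
    by (cases "mvec M (fcoords v)") (simp add: farey_act_eq_mvec mvec_mneg fvert_of_uminus)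
qed

lemma farey_act_minv [simp]: "M \<in> SL2 \<Longrightarrow> farey_act (minv M) (farey_act M v) = v"
  by (simp add: farey_act_farey_act minv_mmul)

lemma farey_adj_farey_act:
  assumes "M \<in> SL2" "farey_adj v w"
  shows "farey_adj (farey_act M v) (farey_act M w)"
proof -
  obtain p q where pq: "mvec M (fcoords v) = (p,q)" by (cases "mvec M (fcoords v)")
  obtain r s where rs: "mvec M (fcoords w) = (r,s)" by (cases "mvec M (fcoords w)")
  have d: "\<bar>det2 (p,q) (r,s)\<bar> = 1"
    using assms(2) det2_mvec[OF assms(1), of "fcoords v" "fcoords w"]
    unfolding pq rs farey_adj_iff_det2 by simp
  have "fcoords (farey_act M v) = (p,q) \<or> fcoords (farey_act M v) = (-p,-q)"
    "fcoords (farey_act M w) = (r,s) \<or> fcoords (farey_act M w) = (-r,-s)"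
    using fcoords_farey_act[OF assms(1), of v] fcoords_farey_act[OF assms(1), of w] pq rs by simp_all
  then show ?thesis using d unfolding farey_adj_iff_det2
    by (auto simp del: det2.simps simp: det2_uminus)
qed


section \<open>The Farey distance\<close>

definition farey_path :: "nat \<Rightarrow> fvert \<Rightarrow> fvert \<Rightarrow> bool" where
  "farey_path n v w \<longleftrightarrow> (\<exists>p. p 0 = v \<and> p n = w \<and> (\<forall>i<n. farey_adj (p i) (p (Suc i))))"

lemma farey_path_0: "farey_path 0 v v"
  by (auto simp: farey_path_def)

lemma farey_path_1: "farey_adj v w \<Longrightarrow> farey_path 1 v w"
  unfolding farey_path_def by (rule exI[of _ "\<lambda>i. if i = 0 then v else w"]) auto

lemma farey_path_append:
  assumes "farey_path n u v" "farey_path m v w"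
  shows "farey_path (n + m) u w"
proof -
  obtain p where p: "p 0 = u" "p n = v" "\<forall>i<n. farey_adj (p i) (p (Suc i))"
    using assms(1) farey_path_def by auto
  obtain q where q: "q 0 = v" "q m = w" "\<forall>i<m. farey_adj (q i) (q (Suc i))"
    using assms(2) farey_path_def by auto
  define r where "r i = (if i \<le> n then p i else q (i - n))" for i
  have "farey_adj (r i) (r (Suc i))" if "i < n + m" for i
  proof (cases "i < n")
    case True
    then show ?thesis using p by (auto simp: r_def)
  next
    case False
    then have "Suc i - n = Suc (i - n)" by auto
    then show ?thesis using False q that p(2) by (auto simp: r_def)
  qed
  moreover have "r 0 = u" "r (n + m) = w" using p q by (auto simp: r_def)
  ultimately show ?thesis unfolding farey_path_def by blast
qed

lemma farey_path_rev:
  assumes "farey_path n v w"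
  shows "farey_path n w v"
proof -
  obtain p where p: "p 0 = v" "p n = w" "\<forall>i<n. farey_adj (p i) (p (Suc i))"
    using assms farey_path_def by auto
  have "farey_adj (p (n - i)) (p (n - Suc i))" if "i < n" for i
  proof -
    have "farey_adj (p (n - Suc i)) (p (Suc (n - Suc i)))" using p(3) that by auto
    moreover have "Suc (n - Suc i) = n - i" using that by auto
    ultimately show ?thesis using farey_adj_sym by auto
  qed
  then show ?thesis using p unfolding farey_path_def by (intro exI[of _ "\<lambda>i. p (n - i)"]) auto
qed

lemma farey_path_farey_act:
  assumes "M \<in> SL2" "farey_path n v w"
  shows "farey_path n (farey_act M v) (farey_act M w)"
proof -
  obtain p where p: "p 0 = v" "p n = w" "\<forall>i<n. farey_adj (p i) (p (Suc i))"
    using assms(2) farey_path_def by auto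
  show ?thesis unfolding farey_path_def
    by (rule exI[of _ "\<lambda>i. farey_act M (p i)"]) (use p farey_adj_farey_act[OF assms(1)] in auto)
qed

lemma farey_parents:
  assumes "q \<ge> 2" "primitive (p, int q)"
  obtains r k1 k2 where "k1 + k2 = q" "1 \<le> k1" "1 \<le> k2"
    "primitive (r, int k1)" "farey_adj (fvert_of (r, int k1)) (fvert_of (p, int q))"
    "primitive (p - r, int k2)" "farey_adj (fvert_of (p - r, int k2)) (fvert_of (p, int q))"
proof -
  obtain u v where uv: "u * p + v * int q = 1"
    using bezout_int[of p "int q"] assms(2) by (auto simp: primitive_def)
  define s where "s = u mod int q"
  have s: "0 \<le> s" "s < int q" using assms(1) by (auto simp: s_def)
  have "p * s mod int q = (u * p) mod int q" by (simp add: s_def mod_mult_right_eq mult.commute)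
  also have "u * p = 1 - v * int q" using uv by simp
  also have "(1 - v * int q) mod int q = 1 mod int q" by (simp add: mod_diff_eq[symmetric])
  finally have ps: "p * s mod int q = 1" using assms(1) by simp
  then have "s \<noteq> 0" using assms(1) by auto
  define r where "r = (p * s) div int q"
  have prs: "p * s - int q * r = 1"
    using ps div_mult_mod_eq[of "p * s" "int q"] by (simp add: r_def algebra_simps)
  define k1 k2 where "k1 = nat s" and "k2 = q - nat s"
  have k: "k1 + k2 = q" "1 \<le> k1" "1 \<le> k2" using s \<open>s \<noteq> 0\<close> by (auto simp: k1_def k2_def)
  have det1: "p * int k1 - int q * r = 1" using prs s by (simp add: k1_def)
  have det2: "(p - r) * int q - int k2 * p = 1"
    using prs s k by (simp add: k1_def k2_def of_nat_diff algebra_simps)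
  have pr: "primitive (r, int k1)" "primitive (p - r, int k2)"
    using primitive_of_det2[of p "int k1" "int q" r] primitive_of_det2[of p "int k2" "int q" "p - r"]
      det1 det2 by (simp_all add: algebra_simps)
  have fc: "fcoords (fvert_of (r, int k1)) = (r, int k1)"
    "fcoords (fvert_of (p - r, int k2)) = (p - r, int k2)"
    "fcoords (fvert_of (p, int q)) = (p, int q)"
    using fcoords_fvert_of_pos pr assms k by auto
  have "r * int q - int k1 * p = -1" "(p - r) * int q - int k2 * p = 1"
    using det1 det2 by (simp_all add: algebra_simps)
  then show thesis
    by (intro that[OF k pr(1) _ pr(2)]) (simp_all add: farey_adj_def fc)
qed

lemma farey_path_from_infinity:
  fixes q :: nat
  shows "q \<ge> 1 \<Longrightarrow> primitive (p, int q) \<Longrightarrow> \<exists>n. farey_path n None (fvert_of (p, int q)) \<and> 2^n \<le> 2*q"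
proof (induction q arbitrary: p rule: less_induct)
  case (less q)
  show ?case
  proof (cases "q = 1")
    case True
    have "fcoords (fvert_of (p, 1)) = (p, 1)" by (simp add: fcoords_fvert_of_pos primitive_def)
    then have "farey_adj None (fvert_of (p, int q))" using True by (simp add: farey_adj_def)
    then show ?thesis using True farey_path_1 by (intro exI[of _ 1]) auto
  next
    case False
    then have "q \<ge> 2" using less.prems by auto
    then obtain r k1 k2 where k: "k1 + k2 = q" "1 \<le> k1" "1 \<le> k2"
      and adj: "primitive (r, int k1)" "farey_adj (fvert_of (r, int k1)) (fvert_of (p, int q))"
        "primitive (p - r, int k2)" "farey_adj (fvert_of (p - r, int k2)) (fvert_of (p, int q))"
      using farey_parents less.prems(2) by blast
    text \<open>Continue from the parent with the smaller denominator, which is at most \<open>q/2\<close>.\<close>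
    have "\<exists>r' k. 2 * k \<le> q \<and> 1 \<le> k \<and> primitive (r', int k)
      \<and> farey_adj (fvert_of (r', int k)) (fvert_of (p, int q))"
    proof (cases "2 * k1 \<le> q")
      case True
      then show ?thesis using k adj by blast
    next
      case False
      then show ?thesis using k adj by (intro exI[of _ "p - r"] exI[of _ k2]) auto
    qed
    then obtain r' k' where small: "2 * k' \<le> q" "1 \<le> k'" "primitive (r', int k')"
      "farey_adj (fvert_of (r', int k')) (fvert_of (p, int q))" by blast
    then obtain n where n: "farey_path n None (fvert_of (r', int k'))" "2^n \<le> 2*k'"
      using less.IH[of k' r'] by auto
    have "farey_path (n + 1) None (fvert_of (p, int q))"
      using farey_path_append[OF n(1) farey_path_1[OF small(4)]] .
    moreover have "2^(n + 1) \<le> 2*q" using n(2) small(1) by simp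
    ultimately show ?thesis by blast
  qed
qed

lemma farey_path_from_infinity_exists: "\<exists>n. farey_path n None v"
proof (cases v)
  case None
  then show ?thesis using farey_path_0 by blast
next
  case (Some x)
  obtain p q where pq: "fcoords v = (p,q)" by (cases "fcoords v")
  have "q > 0" using pq Some fcoords_Some(1) by simp
  moreover have "primitive (p,q)" using fcoords_primitive[of v] pq by simp
  moreover have "fvert_of (p,q) = v" using fvert_of_fcoords[of v] pq by simp
  moreover have "nat q \<ge> 1" "int (nat q) = q" using \<open>q > 0\<close> by auto
  ultimately show ?thesis using farey_path_from_infinity[of "nat q" p] by auto
qed

lemma farey_path_exists: "\<exists>n. farey_path n v w"
proof -
  obtain n m where "farey_path n None v" "farey_path m None w"
    using farey_path_from_infinity_exists by blast
  then show ?thesis using farey_path_append farey_path_rev by blast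
qed

lemma farey_dist_le: "farey_path n v w \<Longrightarrow> farey_dist v w \<le> n"
  unfolding farey_dist_def farey_path_def[symmetric] by (rule Least_le)

lemma farey_path_farey_dist: "farey_path (farey_dist v w) v w"
  unfolding farey_dist_def farey_path_def[symmetric] using farey_path_exists by (rule LeastI_ex)

lemma farey_dist_sym: "farey_dist v w = farey_dist w v"
  using farey_dist_le[OF farey_path_rev[OF farey_path_farey_dist[of v w]]]
    farey_dist_le[OF farey_path_rev[OF farey_path_farey_dist[of w v]]] by simp

lemma farey_dist_triangle: "farey_dist u w \<le> farey_dist u v + farey_dist v w"
  using farey_dist_le[OF farey_path_append[OF farey_path_farey_dist farey_path_farey_dist]] .

lemma farey_dist_farey_act:
  assumes "M \<in> SL2"
  shows "farey_dist (farey_act M v) (farey_act M w) = farey_dist v w"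
proof (rule antisym)
  show "farey_dist (farey_act M v) (farey_act M w) \<le> farey_dist v w"
    using farey_dist_le[OF farey_path_farey_act[OF assms farey_path_farey_dist]] .
  show "farey_dist v w \<le> farey_dist (farey_act M v) (farey_act M w)"
    using farey_dist_le[OF farey_path_farey_act[OF minv_in_SL2[OF assms]
        farey_path_farey_dist[of "farey_act M v" "farey_act M w"]]] assms
    by simp
qed


section \<open>A min-plus recursion for positive matrices\<close>

definition neg_vertex :: "fvert \<Rightarrow> bool" where
  "neg_vertex v \<longleftrightarrow> (\<exists>r. v = Some r \<and> r < 0)"

definition pos_vertex :: "fvert \<Rightarrow> bool" where
  "pos_vertex v \<longleftrightarrow> (\<exists>r. v = Some r \<and> r > 0)"

lemma not_farey_adj_neg_pos:
  assumes "neg_vertex v" "pos_vertex w"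
  shows "\<not> farey_adj v w"
proof
  assume adj: "farey_adj v w"
  obtain r r' where r: "v = Some r" "r < 0" and r': "w = Some r'" "r' > 0"
    using assms by (auto simp: neg_vertex_def pos_vertex_def)
  obtain p q p' q' where pq: "fcoords (Some r) = (p,q)" and pq': "fcoords (Some r') = (p',q')"
    by (cases "fcoords (Some r)"; cases "fcoords (Some r')")
  have "q > 0" "p < 0" "q' > 0" "p' > 0"
    using fcoords_Some[OF pq] fcoords_Some[OF pq'] r r'
    by (auto simp: Fract_less_zero_iff zero_less_Fract_iff)
  then have "1 \<le> (-p) * q'" "1 \<le> q * p'"
    using mult_mono[of 1 "-p" 1 q'] mult_mono[of 1 q 1 p'] by simp_all
  moreover have "\<bar>p * q' - q * p'\<bar> = 1" using adj r r' pq pq' by (simp add: farey_adj_def)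
  ultimately show False by linarith
qed

lemma farey_path_neg_pos:
  assumes "farey_path n v w" "neg_vertex v" "pos_vertex w"
  obtains i u where "i \<le> n" "u = None \<or> u = Some 0" "farey_path i v u" "farey_path (n - i) u w"
proof -
  obtain p where p: "p 0 = v" "p n = w" "\<forall>i<n. farey_adj (p i) (p (Suc i))"
    using assms(1) farey_path_def by auto
  have "\<exists>i\<le>n. p i = None \<or> p i = Some 0"
  proof (rule ccontr)
    assume avoid: "\<not> (\<exists>i\<le>n. p i = None \<or> p i = Some 0)"
    have "neg_vertex (p i)" if "i \<le> n" for i
      using that
    proof (induction i)
      case 0
      then show ?case using p assms by simp
    next
      case (Suc i)
      obtain x where x: "p (Suc i) = Some x" "x \<noteq> 0" using avoid Suc.prems by (cases "p (Suc i)") auto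
      have "neg_vertex (p i)" "farey_adj (p i) (p (Suc i))" using Suc p(3) by simp_all
      then have "\<not> pos_vertex (p (Suc i))" using not_farey_adj_neg_pos by blast
      then show ?case using x by (auto simp: neg_vertex_def pos_vertex_def)
    qed
    then have "neg_vertex w" using p(2) by blast
    then show False using assms(3) by (auto simp: neg_vertex_def pos_vertex_def)
  qed
  then obtain i where i: "i \<le> n" "p i = None \<or> p i = Some 0" by blast
  have "farey_path i v (p i)" unfolding farey_path_def using p i by (intro exI[of _ p]) auto
  moreover have "farey_path (n - i) (p i) w" unfolding farey_path_def using p i
    by (intro exI[of _ "\<lambda>k. p (i + k)"]) auto
  ultimately show thesis using that i by blast
qed

lemma farey_dist_neg_pos:
  assumes "neg_vertex z" "pos_vertex y"
  shows "farey_dist z y = min (farey_dist z (Some 0) + farey_dist (Some 0) y)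
                              (farey_dist z None + farey_dist None y)"
proof -
  obtain i u where iu: "i \<le> farey_dist z y" "u = None \<or> u = Some 0" "farey_path i z u"
    "farey_path (farey_dist z y - i) u y"
    using farey_path_neg_pos[OF farey_path_farey_dist assms] by blast
  have "farey_dist z u + farey_dist u y \<le> farey_dist z y"
    using farey_dist_le[OF iu(3)] farey_dist_le[OF iu(4)] iu(1) by linarith
  then show ?thesis using iu(2) farey_dist_triangle[of z y "Some 0"] farey_dist_triangle[of z y None]
    by auto
qed

fun positive_mat :: "imat \<Rightarrow> bool" where
  "positive_mat (a,b,c,d) \<longleftrightarrow> a > 0 \<and> b > 0 \<and> c > 0 \<and> d > 0"

lemma positive_mat_mmul: "positive_mat A \<Longrightarrow> positive_mat B \<Longrightarrow> positive_mat (mmul A B)"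
  by (cases A; cases B) (simp add: add_pos_pos)

lemma pos_vertex_farey_act:
  assumes "positive_mat N"
  shows "pos_vertex (farey_act N None)" "pos_vertex (farey_act N (Some 0))"
  using assms by (cases N; simp add: pos_vertex_def fvert_of_def zero_less_Fract_iff)+

lemma neg_vertex_farey_act_minv:
  assumes "positive_mat N"
  shows "neg_vertex (farey_act (minv N) None)"
proof -
  obtain a b c d where N: "N = (a,b,c,d)" by (cases N)
  have "farey_act (minv N) None = fvert_of (-d, c)" using fvert_of_uminus[of "-d" c] by (simp add: N)
  then show ?thesis using assms by (simp add: N neg_vertex_def fvert_of_def Fract_less_zero_iff)
qed

text \<open>A geodesic from \<open>\<infinity>\<close> to \<open>N y\<close> passes through \<open>N 0\<close> or \<open>N \<infinity>\<close>, because \<open>N\<^sup>-\<^sup>1 \<infinity>\<close> is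
  negative while \<open>y\<close> is positive.\<close>

lemma farey_dist_positive_mat:
  assumes "positive_mat N" "N \<in> SL2" "pos_vertex y"
  shows "farey_dist None (farey_act N y) =
    min (farey_dist None (farey_act N (Some 0)) + farey_dist (Some 0) y)
        (farey_dist None (farey_act N None) + farey_dist None y)"
proof -
  define z where "z = farey_act (minv N) None"
  have moved: "farey_dist z v = farey_dist None (farey_act N v)" for v
    using farey_dist_farey_act[OF assms(2), of z v] assms(2)
    by (simp add: z_def farey_act_farey_act mmul_minv minv_in_SL2)
  show ?thesis
    using farey_dist_neg_pos[OF neg_vertex_farey_act_minv[OF assms(1)] assms(3)]
    by (simp add: moved flip: z_def)
qed

primrec mpow :: "imat \<Rightarrow> nat \<Rightarrow> imat" where
  "mpow M 0 = I2"
| "mpow M (Suc n) = mmul M (mpow M n)"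

lemma mpow_in_SL2: "M \<in> SL2 \<Longrightarrow> mpow M n \<in> SL2"
  by (induction n) (auto simp: I2_in_SL2 mmul_in_SL2)

lemma mpow_Suc_right: "mpow M (Suc n) = mmul (mpow M n) M"
  by (induction n) (simp_all add: mmul_assoc[symmetric])

lemma positive_mat_mpow: "positive_mat M \<Longrightarrow> positive_mat (mpow M (Suc n))"
  by (induction n) (auto simp: positive_mat_mmul)

definition orbit_inf :: "imat \<Rightarrow> nat \<Rightarrow> nat" where
  "orbit_inf M j = farey_dist None (farey_act (mpow M j) None)"

definition orbit_zero :: "imat \<Rightarrow> nat \<Rightarrow> nat" where
  "orbit_zero M j = farey_dist None (farey_act (mpow M j) (Some 0))"

lemma orbit_minplus_recursion:
  assumes "positive_mat M" "M \<in> SL2" "j \<ge> 1"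
  shows "orbit_inf M (Suc j) = min (orbit_zero M j + farey_dist (Some 0) (farey_act M None))
                                   (orbit_inf M j + orbit_inf M 1)"
    "orbit_zero M (Suc j) = min (orbit_zero M j + farey_dist (Some 0) (farey_act M (Some 0)))
                                (orbit_inf M j + orbit_zero M 1)"
proof -
  have pos: "positive_mat (mpow M j)"
    using positive_mat_mpow[OF assms(1), of "j - 1"] assms(3) by simp
  have act: "farey_act (mpow M (Suc j)) v = farey_act (mpow M j) (farey_act M v)" for v
    unfolding mpow_Suc_right by (rule farey_act_farey_act[OF assms(2), symmetric])
  note step = farey_dist_positive_mat[OF pos mpow_in_SL2[OF assms(2)]]
  show "orbit_inf M (Suc j) = min (orbit_zero M j + farey_dist (Some 0) (farey_act M None))
                                   (orbit_inf M j + orbit_inf M 1)"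
    unfolding orbit_inf_def act step[OF pos_vertex_farey_act(1)[OF assms(1)]]
    by (simp add: orbit_zero_def orbit_inf_def)
  show "orbit_zero M (Suc j) = min (orbit_zero M j + farey_dist (Some 0) (farey_act M (Some 0)))
                                (orbit_inf M j + orbit_zero M 1)"
    unfolding orbit_zero_def act step[OF pos_vertex_farey_act(2)[OF assms(1)]]
    by (simp add: orbit_zero_def orbit_inf_def)
qed


section \<open>Linear growth of min-plus recursions\<close>

lemma minplus_lower_bound:
  fixes x y :: "nat \<Rightarrow> nat" and a11 a12 a21 a22 :: nat and mu :: real
  assumes rx: "\<And>j. j \<ge> 1 \<Longrightarrow> x (Suc j) = min (y j + a12) (x j + a11)"
    and ry: "\<And>j. j \<ge> 1 \<Longrightarrow> y (Suc j) = min (y j + a22) (x j + a21)"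
    and mu: "mu \<le> a11" "mu \<le> a22" "2*mu \<le> a12 + a21" "mu \<ge> 0"
  shows "j \<ge> 1 \<Longrightarrow> j*mu - 2*mu \<le> x j \<and> j*mu - (mu + a12) \<le> y j"
proof (induction j rule: dec_induct)
  case base
  then show ?case using mu(4) by simp
next
  case (step j)
  have "real (x (Suc j)) = min (real (y j) + a12) (real (x j) + a11)"
    "real (y (Suc j)) = min (real (y j) + a22) (real (x j) + a21)"
    using rx[OF step(1)] ry[OF step(1)] by simp_all
  then show ?case using step(3) mu by (simp add: algebra_simps min_def)
qed

lemma linear_bound_of_periodic_increment:
  fixes x :: "nat \<Rightarrow> real" and mu :: real and p :: nat
  assumes "p \<ge> 1" "mu \<ge> 0" and step: "\<And>j. j \<ge> 1 \<Longrightarrow> x (j + p) \<le> x j + p * mu"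
  shows "\<exists>K. \<forall>j\<ge>1. x j \<le> j * mu + K"
proof -
  define K where "K = (\<Sum>i=1..p. \<bar>x i\<bar>)"
  have "x j \<le> j * mu + K" if "j \<ge> 1" for j
    using that
  proof (induction j rule: less_induct)
    case (less j)
    show ?case
    proof (cases "j \<le> p")
      case True
      then have "\<bar>x j\<bar> \<le> K" unfolding K_def using less.prems
        by (intro member_le_sum[of j "{1..p}" "\<lambda>i. \<bar>x i\<bar>"]) auto
      moreover have "0 \<le> j * mu" using assms(2) by simp
      ultimately show ?thesis by linarith
    next
      case False
      define i where "i = j - p"
      have i: "j = i + p" "i \<ge> 1" using False by (simp_all add: i_def)
      have "x j \<le> x i + p * mu" using step[OF i(2)] i(1) by simp
      also have "\<dots> \<le> i * mu + K + p * mu" using less.IH[of i] i assms(1) by simp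
      finally show ?thesis using i(1) by (simp add: algebra_simps)
    qed
  qed
  then show ?thesis by blast
qed

lemma minplus_upper_bound:
  fixes x y :: "nat \<Rightarrow> nat" and a11 a12 a21 a22 :: nat and mu :: real
  assumes rx: "\<And>j. j \<ge> 1 \<Longrightarrow> x (Suc j) = min (y j + a12) (x j + a11)"
    and ry: "\<And>j. j \<ge> 1 \<Longrightarrow> y (Suc j) = min (y j + a22) (x j + a21)"
    and mu: "mu = a11 \<or> mu = a22 \<or> 2*mu = a12 + a21"
  shows "\<exists>K. \<forall>j\<ge>1. x j \<le> j*mu + K"
proof -
  have mu0: "mu \<ge> 0" using mu by auto
  consider "mu = a11" | "mu = a22" | "2*mu = a12 + a21" using mu by blast
  then show ?thesis
  proof cases
    case 1
    show ?thesis using rx 1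
      by (intro linear_bound_of_periodic_increment[where p = 1, OF _ mu0]) (simp_all add: min_le_iff_disj)
  next
    case 2
    have "\<exists>K. \<forall>j\<ge>1. y j \<le> j*mu + K" using ry 2
      by (intro linear_bound_of_periodic_increment[where p = 1, OF _ mu0]) (simp_all add: min_le_iff_disj)
    then obtain K where K: "\<forall>j\<ge>1. y j \<le> j*mu + K" by blast
    have "x j \<le> j*mu + (x 1 + K + a12)" if "j \<ge> 1" for j
    proof (cases j)
      case (Suc i)
      show ?thesis
      proof (cases "i = 0")
        case False
        then have "real (x j) \<le> y i + a12" using rx[of i] Suc by simp
        also have "\<dots> \<le> i*mu + K + a12" using K False by simp
        also have "\<dots> \<le> j*mu + (x 1 + K + a12)" using Suc mu0 by (simp add: algebra_simps)
        finally show ?thesis .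
      qed (use Suc mu0 K in auto)
    qed (use that in simp)
    then show ?thesis by blast
  next
    case 3
    have "real (x (j + 2)) \<le> x j + 2 * mu" if "j \<ge> 1" for j
      using rx[of "Suc j"] ry[of j] that 3 by (simp add: min_le_iff_disj)
    then show ?thesis by (intro linear_bound_of_periodic_increment[where p = 2, OF _ mu0]) simp_all
  qed
qed

text \<open>The min-plus eigenvalue of the matrix \<open>(a\<^sub>i\<^sub>j)\<close>: the minimal mean weight of a cycle.\<close>

definition minplus_rate :: "nat \<Rightarrow> nat \<Rightarrow> nat \<Rightarrow> nat \<Rightarrow> real" where
  "minplus_rate a11 a12 a21 a22 = min (min (real a11) (real a22)) ((real a12 + real a21) / 2)"

lemma minplus_linear_growth:
  fixes x y :: "nat \<Rightarrow> nat" and a11 a12 a21 a22 :: nat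
  assumes rx: "\<And>j. j \<ge> 1 \<Longrightarrow> x (Suc j) = min (y j + a12) (x j + a11)"
    and ry: "\<And>j. j \<ge> 1 \<Longrightarrow> y (Suc j) = min (y j + a22) (x j + a21)"
  shows "\<exists>K. \<forall>j\<ge>1. \<bar>real (x j) - j * minplus_rate a11 a12 a21 a22\<bar> \<le> K"
proof -
  define mu where "mu = minplus_rate a11 a12 a21 a22"
  have mu_le: "mu \<le> a11" "mu \<le> a22" "2*mu \<le> a12 + a21" "mu \<ge> 0"
    by (simp_all add: mu_def minplus_rate_def min_def)
  obtain K where up: "\<forall>j\<ge>1. x j \<le> j*mu + K"
    using minplus_upper_bound[where x = x and y = y, OF rx ry, of mu]
    unfolding mu_def minplus_rate_def min_def by fastforce
  have "\<bar>real (x j) - j*mu\<bar> \<le> max (2*mu) K" if "j \<ge> 1" for j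
  proof -
    have "j*mu - 2*mu \<le> x j" using minplus_lower_bound[where x = x and y = y, OF rx ry mu_le that] by simp
    moreover have "x j \<le> j*mu + K" using up that by simp
    ultimately show ?thesis by (simp add: abs_le_iff max_def)
  qed
  then show ?thesis unfolding mu_def by blast
qed


section \<open>Translation lengths of hyperbolic elements\<close>

lemma liminf_eq_of_bounded_deviation:
  fixes z :: "nat \<Rightarrow> real" and mu K :: real
  assumes dev: "\<forall>j\<ge>1. \<bar>z j - j*mu\<bar> \<le> K"
  shows "liminf (\<lambda>j. ereal (z j / real j)) = ereal mu"
proof -
  have "(\<lambda>j. z j / real j) \<longlonglongrightarrow> mu"
  proof (rule tendsto_sandwich[of "\<lambda>j. mu - K / real j" _ _ "\<lambda>j. mu + K / real j"])
    show "\<forall>\<^sub>F j in sequentially. mu - K / real j \<le> z j / real j"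
      using eventually_ge_at_top[of 1]
    proof eventually_elim
      case (elim j)
      then have "j*mu - K \<le> z j" using dev by force
      then have "(j*mu - K) / real j \<le> z j / real j" by (intro divide_right_mono) auto
      then show ?case using elim by (simp add: diff_divide_distrib)
    qed
    show "\<forall>\<^sub>F j in sequentially. z j / real j \<le> mu + K / real j"
      using eventually_ge_at_top[of 1]
    proof eventually_elim
      case (elim j)
      then have "z j \<le> j*mu + K" using dev by force
      then have "z j / real j \<le> (j*mu + K) / real j" by (intro divide_right_mono) auto
      then show ?case using elim by (simp add: add_divide_distrib)
    qed
    show "(\<lambda>j. mu - K / real j) \<longlonglongrightarrow> mu" "(\<lambda>j. mu + K / real j) \<longlonglongrightarrow> mu"
      using tendsto_diff[OF tendsto_const lim_const_over_n[of K]]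
        tendsto_add[OF tendsto_const lim_const_over_n[of K]] by simp_all
  qed
  then show ?thesis by (intro lim_imp_Liminf) (auto intro: tendsto_ereal)
qed

lemma farey_dist_orbit_basepoint:
  assumes "g \<in> SL2"
  shows "farey_dist v (farey_act g v) \<le> farey_dist w (farey_act g w) + 2 * farey_dist v w"
proof -
  have "farey_dist v (farey_act g v) \<le> farey_dist v w + farey_dist w (farey_act g v)"
    by (rule farey_dist_triangle)
  also have "farey_dist w (farey_act g v) \<le> farey_dist w (farey_act g w) + farey_dist (farey_act g w) (farey_act g v)"
    by (rule farey_dist_triangle)
  also have "farey_dist (farey_act g w) (farey_act g v) = farey_dist v w"
    using farey_dist_farey_act[OF assms] farey_dist_sym[of w v] by simp
  finally show ?thesis by simp
qed

lemma farey_act_mconj: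
  assumes "g \<in> SL2" "M \<in> SL2"
  shows "farey_act (mconj g M) v = farey_act g (farey_act M (farey_act (minv g) v))"
  using assms by (simp add: mconj_def farey_act_farey_act minv_in_SL2 mmul_in_SL2 mmul_assoc)

lemma funpow_farey_act_mconj:
  assumes "g \<in> SL2" "M \<in> SL2"
  shows "(farey_act (mconj g M) ^^ j) v = farey_act g (farey_act (mpow M j) (farey_act (minv g) v))"
proof (induction j)
  case 0
  then show ?case using assms by (simp add: farey_act_farey_act mmul_minv minv_in_SL2)
next
  case (Suc j)
  then have "(farey_act (mconj g M) ^^ Suc j) v
      = farey_act (mconj g M) (farey_act g (farey_act (mpow M j) (farey_act (minv g) v)))"
    by simp
  also have "\<dots> = farey_act g (farey_act M (farey_act (mpow M j) (farey_act (minv g) v)))"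
    by (simp only: farey_act_mconj[OF assms] farey_act_minv[OF assms(1)])
  also have "\<dots> = farey_act g (farey_act (mpow M (Suc j)) (farey_act (minv g) v))"
    using assms by (simp add: farey_act_farey_act mpow_in_SL2)
  finally show ?case .
qed

text \<open>Conjugating moves the base point \<open>\<infinity>\<close> only by a bounded distance, so the translation
  length of a conjugate is the growth rate of the orbit of \<open>\<infinity>\<close>.\<close>

lemma transl_len_psl_conjclass:
  fixes mu K :: real
  assumes "M \<in> SL2" "M' \<in> psl_conjclass M" and growth: "\<forall>j\<ge>1. \<bar>real (orbit_inf M j) - j*mu\<bar> \<le> K"
  shows "transl_len M' = ereal mu"
proof -
  obtain g where g: "g \<in> SL2" "M' = mconj g M \<or> M' = mneg (mconj g M)"
    using assms(2) unfolding psl_conjclass_iff by blast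
  define w where "w = farey_act (minv g) None"
  define z where "z j = farey_dist None ((farey_act M' ^^ j) None)" for j
  have M': "farey_act M' = farey_act (mconj g M)" using g(2) by (auto simp only: farey_act_mneg)
  have z: "z j = farey_dist w (farey_act (mpow M j) w)" for j
  proof -
    have "z j = farey_dist None (farey_act g (farey_act (mpow M j) w))"
      unfolding z_def M' funpow_farey_act_mconj[OF g(1) assms(1)] w_def ..
    also have "\<dots> = farey_dist w (farey_act (mpow M j) w)"
      using farey_dist_farey_act[OF minv_in_SL2[OF g(1)], of None "farey_act g (farey_act (mpow M j) w)"] g(1)
      by (simp add: w_def)
    finally show ?thesis .
  qed
  have shift: "\<bar>real (z j) - real (orbit_inf M j)\<bar> \<le> 2 * farey_dist w None" for j
  proof -
    have "z j \<le> orbit_inf M j + 2 * farey_dist w None" "orbit_inf M j \<le> z j + 2 * farey_dist w None"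
      using farey_dist_orbit_basepoint[OF mpow_in_SL2[OF assms(1)], where v = w and w = None]
        farey_dist_orbit_basepoint[OF mpow_in_SL2[OF assms(1)], where v = None and w = w]
      by (simp_all add: z orbit_inf_def farey_dist_sym[of None w])
    then have "real (z j) \<le> real (orbit_inf M j) + 2 * farey_dist w None"
      "real (orbit_inf M j) \<le> real (z j) + 2 * farey_dist w None"
      by (metis of_nat_add of_nat_le_iff of_nat_mult of_nat_numeral)+
    then show ?thesis by (simp add: abs_le_iff)
  qed
  have "\<bar>real (z j) - j*mu\<bar> \<le> 2 * farey_dist w None + K" if "j \<ge> 1" for j
  proof -
    have "\<bar>real (z j) - j*mu\<bar> \<le> \<bar>real (z j) - real (orbit_inf M j)\<bar> + \<bar>real (orbit_inf M j) - j*mu\<bar>"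
      using abs_triangle_ineq[of "real (z j) - real (orbit_inf M j)" "real (orbit_inf M j) - j*mu"] by simp
    also have "\<dots> \<le> 2 * farey_dist w None + K" using shift[of j] growth that by (intro add_mono) auto
    finally show ?thesis .
  qed
  then have "\<forall>j\<ge>1. \<bar>real (z j) - j*mu\<bar> \<le> 2 * farey_dist w None + K" by blast
  from liminf_eq_of_bounded_deviation[OF this] show ?thesis
    unfolding transl_len_def z_def .
qed

lemma transl_len_positive_mat:
  assumes "positive_mat M" "M \<in> SL2" "M' \<in> psl_conjclass M"
  shows "transl_len M' = ereal (minplus_rate (orbit_inf M 1) (farey_dist (Some 0) (farey_act M None))
                                  (orbit_zero M 1) (farey_dist (Some 0) (farey_act M (Some 0))))"
  using minplus_linear_growth[where x = "orbit_inf M" and y = "orbit_zero M",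
      OF orbit_minplus_recursion[OF assms(1,2)]] transl_len_psl_conjclass[OF assms(2,3)]
  by blast

lemma transl_len_hyperbolic:
  assumes "hyperbolic M"
  obtains m :: nat where "transl_len M = ereal (real m / 2)" "(2::int)^(m div 2) \<le> 2 * \<bar>mtr M\<bar>^2"
proof -
  obtain a b c d where pos: "(a,b,c,d) \<in> psl_conjclass M" "a > 0" "b > 0" "c > 0" "d > 0"
    "a + d = \<bar>mtr M\<bar>" "a*d - b*c = 1" "b*c < \<bar>mtr M\<bar>^2"
    by (rule hyperbolic_positive_rep[OF assms])
  define Mr where "Mr = (a,b,c,d)"
  have P: "positive_mat Mr" and S: "Mr \<in> SL2" and C: "M \<in> psl_conjclass Mr"
    using pos psl_conjclass_sym by (simp_all add: Mr_def SL2_def)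
  define m where "m = min (min (2 * orbit_inf Mr 1) (2 * farey_dist (Some 0) (farey_act Mr (Some 0))))
    (farey_dist (Some 0) (farey_act Mr None) + orbit_zero Mr 1)"
  have "transl_len M = ereal (real m / 2)"
    unfolding transl_len_positive_mat[OF P S C] m_def by (simp add: minplus_rate_def min_def)
  moreover have "(2::int)^(m div 2) \<le> 2 * \<bar>mtr M\<bar>^2"
  proof -
    have "primitive (a, c)" using primitive_of_det2[of b c d a] pos(7) by (simp add: algebra_simps)
    then have "\<exists>n. farey_path n None (fvert_of (a, int (nat c))) \<and> 2^n \<le> 2 * nat c"
      using farey_path_from_infinity[of "nat c" a] pos(4) by simp
    then obtain n where n: "farey_path n None (fvert_of (a, c))" "2^n \<le> 2 * nat c"
      using pos(4) by auto
    have "m div 2 \<le> orbit_inf Mr 1" unfolding m_def by linarith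
    also have "orbit_inf Mr 1 \<le> n" using farey_dist_le[OF n(1)] by (simp add: orbit_inf_def Mr_def)
    finally have "(2::nat)^(m div 2) \<le> 2^n" by (rule power_increasing) simp
    also note n(2)
    finally have "(2::nat)^(m div 2) \<le> 2 * nat c" .
    then have "int ((2::nat)^(m div 2)) \<le> int (2 * nat c)" by (simp only: of_nat_le_iff)
    then have "(2::int)^(m div 2) \<le> 2 * c" using pos(4) by simp
    also have "c \<le> b*c" using pos(3,4) by simp
    finally show ?thesis using pos(8) by simp
  qed
  ultimately show thesis using that by blast
qed


section \<open>Counting classes of bounded dilatation\<close>

definition class_rep :: "imat set \<Rightarrow> imat" where
  "class_rep C = (SOME M. M \<in> C)"

lemma class_rep_psl_conjclass:
  assumes "hyperbolic M"
  shows "class_rep (psl_conjclass M) \<in> psl_conjclass M" "hyperbolic (class_rep (psl_conjclass M))"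
    "\<bar>mtr (class_rep (psl_conjclass M))\<bar> = \<bar>mtr M\<bar>"
proof -
  show rep: "class_rep (psl_conjclass M) \<in> psl_conjclass M"
    unfolding class_rep_def using psl_conjclass_refl by (rule someI)
  show "hyperbolic (class_rep (psl_conjclass M))" using hyperbolic_psl_conjclass[OF assms rep] .
  show "\<bar>mtr (class_rep (psl_conjclass M))\<bar> = \<bar>mtr M\<bar>" using abs_mtr_psl_conjclass[OF rep] .
qed

definition hyp_below :: "real \<Rightarrow> imat set set" where
  "hyp_below R = {C \<in> Hyp. cdilat C < R}"

lemma hyp_below_trace_bound:
  fixes R :: real
  assumes "C \<in> hyp_below R"
  obtains M where "hyperbolic M" "C = psl_conjclass M" "\<bar>mtr M\<bar> < R + 1"
proof -
  obtain M where M: "hyperbolic M" "C = psl_conjclass M" using assms by (auto simp: hyp_below_def Hyp_def)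
  have "\<bar>mtr M\<bar> - 1 < cdilat C"
    using dilat_bounds(1)[OF class_rep_psl_conjclass(2)[OF M(1)]] class_rep_psl_conjclass(3)[OF M(1)]
    by (simp add: M(2) cdilat_def class_rep_def)
  then show thesis using that M assms by (simp add: hyp_below_def)
qed

lemma finite_hyp_below: "finite (hyp_below R)"
proof -
  define B :: int where "B = \<lceil>R + 1\<rceil>^2"
  have "hyp_below R \<subseteq> psl_conjclass ` ({0..B} \<times> {0..B} \<times> {0..B} \<times> {0..B})"
  proof
    fix C assume "C \<in> hyp_below R"
    then obtain M where M: "hyperbolic M" "C = psl_conjclass M" "\<bar>mtr M\<bar> < R + 1"
      by (rule hyp_below_trace_bound)
    obtain a b c d where pos: "(a,b,c,d) \<in> psl_conjclass M" "a > 0" "b > 0" "c > 0" "d > 0"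
      "a + d = \<bar>mtr M\<bar>" "a*d - b*c = 1" "b*c < \<bar>mtr M\<bar>^2"
      by (rule hyperbolic_positive_rep[OF M(1)])
    have "\<bar>mtr M\<bar> \<le> \<lceil>R + 1\<rceil>" using M(3) by linarith
    then have tB: "\<bar>mtr M\<bar>^2 \<le> B" unfolding B_def by (intro power_mono) auto
    have "1 \<le> \<bar>mtr M\<bar>" using pos(2,5,6) by linarith
    then have "\<bar>mtr M\<bar> * 1 \<le> \<bar>mtr M\<bar> * \<bar>mtr M\<bar>" by (intro mult_left_mono) auto
    then have tt: "\<bar>mtr M\<bar> \<le> \<bar>mtr M\<bar>^2" by (simp add: power2_eq_square)
    have "b \<le> b*c" "c \<le> b*c" using pos(3,4) by simp_all
    then have "a \<le> B" "b \<le> B" "c \<le> B" "d \<le> B" using pos(2,5,6,8) tB tt by linarith+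
    then have "(a,b,c,d) \<in> {0..B} \<times> {0..B} \<times> {0..B} \<times> {0..B}" using pos(2-5) by simp
    moreover have "C = psl_conjclass (a,b,c,d)" using psl_conjclass_eq[OF pos(1)] M(2) by simp
    ultimately show "C \<in> psl_conjclass ` ({0..B} \<times> {0..B} \<times> {0..B} \<times> {0..B})" by blast
  qed
  then show ?thesis by (rule finite_subset) simp
qed

definition transl_count_bound :: "real \<Rightarrow> nat" where
  "transl_count_bound R = nat \<lceil>4 * log 2 (R + 1)\<rceil> + 4"

lemma transl_count_bound_le:
  assumes "R \<ge> 0"
  shows "real (transl_count_bound R) \<le> 5 + 4 * log 2 (R + 1)"
proof -
  have "log 2 (R + 1) \<ge> 0" using assms by simp
  then show ?thesis unfolding transl_count_bound_def by linarith
qed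

lemma ctransl_hyp_below:
  assumes "C \<in> hyp_below R"
  shows "ctransl C \<in> (\<lambda>m. ereal (real m / 2)) ` {..<transl_count_bound R}"
proof -
  obtain M0 where M0: "hyperbolic M0" "C = psl_conjclass M0" "\<bar>mtr M0\<bar> < R + 1"
    using assms by (rule hyp_below_trace_bound)
  define X where "X = class_rep C"
  have X: "hyperbolic X" "\<bar>mtr X\<bar> = \<bar>mtr M0\<bar>" using class_rep_psl_conjclass[OF M0(1)] by (simp_all add: X_def M0(2))
  obtain m where m: "transl_len X = ereal (real m / 2)" "(2::int)^(m div 2) \<le> 2 * \<bar>mtr X\<bar>^2"
    using transl_len_hyperbolic[OF X(1)] by blast
  define t where "t = real_of_int \<bar>mtr M0\<bar>"
  have t: "0 \<le> t" "t < R + 1" using M0(3) by (simp_all add: t_def)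
  have "real_of_int ((2::int)^(m div 2)) \<le> real_of_int (2 * \<bar>mtr X\<bar>^2)"
    using m(2) by (simp only: of_int_le_iff)
  then have "2 powr real (m div 2) \<le> 2 * t^2" using X(2) by (simp add: t_def powr_realpow)
  also have "\<dots> \<le> 2 * (R + 1)^2" using t by (simp add: power_mono)
  finally have "real (m div 2) \<le> log 2 (2 * (R + 1)^2)" using t by (subst le_log_iff) auto
  also have "\<dots> = 1 + 2 * log 2 (R + 1)" using t by (simp add: log_mult log_nat_power)
  finally have "real (m div 2) \<le> 1 + 2 * log 2 (R + 1)" .
  moreover have "real m \<le> 2 * real (m div 2) + 1" by linarith
  ultimately have "real m < real_of_int \<lceil>4 * log 2 (R + 1)\<rceil> + 4"
    using le_of_int_ceiling[of "4 * log 2 (R + 1)"] by linarith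
  then have "m < transl_count_bound R" unfolding transl_count_bound_def by linarith
  moreover have "ctransl C = ereal (real m / 2)" using m(1) by (simp add: ctransl_def X_def class_rep_def)
  ultimately show ?thesis by blast
qed

text \<open>Pigeonhole: each of the few possible translation lengths is taken by at most \<open>k - 1\<close>
  classes that have fewer than \<open>k\<close> partners.\<close>

lemma card_hyp_below_few_partners:
  "card {C \<in> hyp_below R. mcount C R < k} \<le> (k - 1) * transl_count_bound R"
proof -
  define Bad where "Bad = {C \<in> hyp_below R. mcount C R < k}"
  have fin: "finite Bad" using finite_hyp_below[of R] by (simp add: Bad_def)
  have fibre: "card {C \<in> Bad. ctransl C = v} \<le> k - 1" if v: "v \<in> ctransl ` Bad" for v
  proof -
    obtain C0 where C0: "C0 \<in> Bad" "ctransl C0 = v" using v by blast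
    have "{C \<in> Bad. ctransl C = v} \<subseteq> {C' \<in> Hyp. cdilat C' < R \<and> ctransl C' = ctransl C0}"
      using C0 by (auto simp: Bad_def hyp_below_def)
    moreover have "finite {C' \<in> Hyp. cdilat C' < R \<and> ctransl C' = ctransl C0}"
      using finite_hyp_below[of R] by (rule finite_subset[rotated]) (auto simp: hyp_below_def)
    ultimately have "card {C \<in> Bad. ctransl C = v} \<le> mcount C0 R"
      unfolding mcount_def by (rule card_mono[rotated])
    moreover have "mcount C0 R < k" using C0(1) by (simp add: Bad_def)
    ultimately show ?thesis by linarith
  qed
  have "Bad = (\<Union>v\<in>ctransl ` Bad. {C \<in> Bad. ctransl C = v})" by auto
  then have "card Bad \<le> (\<Sum>v\<in>ctransl ` Bad. card {C \<in> Bad. ctransl C = v})"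
    using card_UN_le[of "ctransl ` Bad" "\<lambda>v. {C \<in> Bad. ctransl C = v}"] fin by simp
  also have "\<dots> \<le> (\<Sum>v\<in>ctransl ` Bad. k - 1)" by (rule sum_mono) (rule fibre)
  also have "\<dots> = (k - 1) * card (ctransl ` Bad)" by simp
  also have "card (ctransl ` Bad) \<le> card ((\<lambda>m. ereal (real m / 2)) ` {..<transl_count_bound R})"
    using ctransl_hyp_below by (intro card_mono) (auto simp: Bad_def)
  also have "\<dots> \<le> transl_count_bound R"
    using card_image_le[of "{..<transl_count_bound R}"] by simp
  finally show ?thesis by (simp add: Bad_def mult_le_mono2)
qed

lemma card_hyp_below_ge: "nat (\<lfloor>R\<rfloor> - 2) \<le> card (hyp_below R)"
proof -
  define f where "f t = psl_conjclass (t, -1, 1, 0)" for t :: int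
  have hyp: "hyperbolic (t, -1, 1, 0)" if "t \<ge> 3" for t :: int
    using that by (simp add: hyperbolic_def SL2_def)
  have "f ` {3..\<lfloor>R\<rfloor>} \<subseteq> hyp_below R"
  proof
    fix C assume "C \<in> f ` {3..\<lfloor>R\<rfloor>}"
    then obtain t where t: "3 \<le> t" "t \<le> \<lfloor>R\<rfloor>" "C = f t" by auto
    note rep = class_rep_psl_conjclass[OF hyp[OF t(1)]]
    have "cdilat C < t"
      using dilat_bounds(2)[OF rep(2)] rep(3) t by (simp add: cdilat_def class_rep_def f_def)
    moreover have "C \<in> Hyp" using hyp[OF t(1)] t(3) unfolding Hyp_def f_def by blast
    ultimately show "C \<in> hyp_below R" using t(2) le_floor_iff by (force simp: hyp_below_def)
  qed
  moreover have "inj_on f {3..\<lfloor>R\<rfloor>}"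
  proof
    fix t t' assume tt: "t \<in> {3..\<lfloor>R\<rfloor>}" "t' \<in> {3..\<lfloor>R\<rfloor>}" "f t = f t'"
    then have "(t, -1, 1, 0) \<in> psl_conjclass (t', -1, 1, 0)"
      using psl_conjclass_refl[of "(t, -1, 1, 0)"] by (simp add: f_def)
    then have "\<bar>t\<bar> = \<bar>t'\<bar>" using abs_mtr_psl_conjclass by fastforce
    then show "t = t'" using tt by auto
  qed
  ultimately have "card {3..\<lfloor>R\<rfloor>} \<le> card (hyp_below R)"
    using card_inj_on_le finite_hyp_below by blast
  then show ?thesis by simp
qed

lemma ratio_few_partners_bound:
  assumes "R \<ge> 4"
  shows "1 - real (k - 1) * (5 + 4 * log 2 (R + 1)) / (R - 3)
           \<le> real (card {C \<in> Hyp. cdilat C < R \<and> mcount C R \<ge> k}) / real (card {C \<in> Hyp. cdilat C < R})"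
    "real (card {C \<in> Hyp. cdilat C < R \<and> mcount C R \<ge> k}) / real (card {C \<in> Hyp. cdilat C < R}) \<le> 1"
proof -
  define Bad where "Bad = {C \<in> hyp_below R. mcount C R < k}"
  have fin: "finite (hyp_below R)" by (rule finite_hyp_below)
  have good: "{C \<in> Hyp. cdilat C < R \<and> mcount C R \<ge> k} = hyp_below R - Bad"
    by (auto simp: hyp_below_def Bad_def)
  have sub: "Bad \<subseteq> hyp_below R" by (auto simp: Bad_def)
  have total: "R - 3 \<le> real (card (hyp_below R))" using card_hyp_below_ge[of R] assms by linarith
  have "real (card Bad) \<le> real (k - 1) * real (transl_count_bound R)"
    using card_hyp_below_few_partners[of R k] unfolding Bad_def of_nat_mult[symmetric] of_nat_le_iff .
  also have "\<dots> \<le> real (k - 1) * (5 + 4 * log 2 (R + 1))"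
    using assms transl_count_bound_le[of R] by (intro mult_left_mono) auto
  finally have "real (card Bad) / real (card (hyp_below R)) \<le> real (k - 1) * (5 + 4 * log 2 (R + 1)) / (R - 3)"
    using total assms by (intro frac_le) auto
  moreover have "real (card (hyp_below R - Bad)) = real (card (hyp_below R)) - real (card Bad)"
    using card_Diff_subset[OF finite_subset[OF sub fin] sub] card_mono[OF fin sub] by (simp add: of_nat_diff)
  moreover have "real (card (hyp_below R)) > 0" using total assms by linarith
  ultimately show "1 - real (k - 1) * (5 + 4 * log 2 (R + 1)) / (R - 3)
           \<le> real (card {C \<in> Hyp. cdilat C < R \<and> mcount C R \<ge> k}) / real (card {C \<in> Hyp. cdilat C < R})"
    "real (card {C \<in> Hyp. cdilat C < R \<and> mcount C R \<ge> k}) / real (card {C \<in> Hyp. cdilat C < R}) \<le> 1"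
    unfolding good hyp_below_def[symmetric] by (simp_all add: diff_divide_distrib)
qed

theorem mainTheorem16:
  fixes k :: nat
  assumes "k \<ge> 1"
  shows "((\<lambda>R::real. real (card {C \<in> Hyp. cdilat C < R \<and> mcount C R \<ge> k})
                     / real (card {C \<in> Hyp. cdilat C < R})) \<longlongrightarrow> 1) at_top"
proof (rule tendsto_sandwich[OF _ _ _ tendsto_const])
  show "((\<lambda>R. 1 - real (k - 1) * (5 + 4 * log 2 (R + 1)) / (R - 3)) \<longlongrightarrow> 1) at_top"
    by real_asymp
  show "\<forall>\<^sub>F R in at_top. 1 - real (k - 1) * (5 + 4 * log 2 (R + 1)) / (R - 3)
          \<le> real (card {C \<in> Hyp. cdilat C < R \<and> mcount C R \<ge> k}) / real (card {C \<in> Hyp. cdilat C < R})"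
    by (rule eventually_mono[OF eventually_ge_at_top[of 4]]) (rule ratio_few_partners_bound(1))
  show "\<forall>\<^sub>F R in at_top. real (card {C \<in> Hyp. cdilat C < R \<and> mcount C R \<ge> k})
          / real (card {C \<in> Hyp. cdilat C < R}) \<le> 1"
    by (rule eventually_mono[OF eventually_ge_at_top[of 4]]) (rule ratio_few_partners_bound(2))
qed

end
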